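(* Let $b\ge2$ be an integer and $\mathbf{x}=x_1x_2\ldots$ an infinite word over $\{0,1,\ldots,b-1\}$ which is not eventually periodic. Then the irrational number $\xi_{\mathbf{x},b}=\sum_{k\ge1}x_k b^{-k}$ satisfies $$\mu(\xi_{\mathbf{x},b})\ge\frac{\mathrm{rep}(\mathbf{x})}{\mathrm{rep}(\mathbf{x})-1},$$ where the right-hand side is $+\infty$ if $\mathrm{rep}(\mathbf{x})=1$ (and is $1$ if $\mathrm{rep}(\mathbf{x})=+\infty$).
   Context: With $x_i^j=x_i\cdots x_j$, $r(n,\mathbf{x})=\min\{m\ge1:\ x_i^{i+n-1}=x_{m-n+1}^{m}\text{ for some } 1\le i\le m-n\}$ and $\mathrm{rep}(\mathbf{x})=\liminf_{n\to\infty}r(n,\mathbf{x})/n$. The irrationality exponent $\mu(\xi)$ of a real number $\xi$ is the supremum of the real numbers $\mu$ such that $|\xi-p/q|<q^{-\mu}$ has infinitely many solutions in rationals $p/q$. *)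

theory Defs
  imports "HOL-Analysis.Analysis"
begin

text \<open>Infinite words are functions x :: nat => nat, indexed from 1 as in the paper
  (the value x 0 is irrelevant).\<close>

definition eventually_periodic :: "(nat \<Rightarrow> nat) \<Rightarrow> bool" where
  "eventually_periodic x \<longleftrightarrow> (\<exists>p>0. \<exists>N\<ge>1. \<forall>k\<ge>N. x (k + p) = x k)"

definition rfun :: "nat \<Rightarrow> (nat \<Rightarrow> nat) \<Rightarrow> nat" where
  "rfun n x = (LEAST m. m \<ge> 1 \<and> (\<exists>i. 1 \<le> i \<and> i + n \<le> m \<and>
        (\<forall>j<n. x (i + j) = x (m + 1 - n + j))))"

definition rep :: "(nat \<Rightarrow> nat) \<Rightarrow> ereal" where
  "rep x = liminf (\<lambda>n. ereal (real (rfun n x) / real n))"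

definition irrationality_exponent :: "real \<Rightarrow> ereal" where
  "irrationality_exponent \<xi> = Sup (ereal ` {\<mu>::real.
     infinite {(p::int, q::int). q > 0 \<and> coprime p q \<and>
        \<bar>\<xi> - real_of_int p / real_of_int q\<bar> < real_of_int q powr (- \<mu>)}})"

definition rep_bound :: "ereal \<Rightarrow> ereal" where
  "rep_bound \<rho> = (if \<rho> = \<infinity> then 1 else if \<rho> = 1 then \<infinity>
     else ereal (real_of_ereal \<rho> / (real_of_ereal \<rho> - 1)))"

end

theory Submission
  imports Defs
begin

text \<open>Write \<open>\<xi>_k\<close> for the number with digits \<open>x_(k+1) x_(k+2) \<dots>\<close>, so that
  \<open>b^k \<xi> = integer + \<xi>_k\<close>. As \<open>x\<close> is not eventually periodic, \<open>\<xi>_k\<close> determines all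
  later digits, so the \<open>\<xi>_k\<close> are pairwise distinct; if \<open>\<xi> = a/c\<close>, every \<open>c \<xi>_k\<close> would
  be one of the integers \<open>0..c\<close>. If the length-\<open>n\<close> block ending at \<open>m = r(n,x)\<close> already
  starts at \<open>i \<le> m - n\<close>, then \<open>\<xi>_(i-1)\<close> and \<open>\<xi>_(m-n)\<close> share their first \<open>n\<close> digits, so
  \<open>q = b^(m-n) - b^(i-1) < b^(m-n)\<close> satisfies \<open>|q \<xi> - p| \<le> b^(-n)\<close> for an integer \<open>p\<close>.
  Whenever \<open>\<mu> (r(n,x) - n) < r(n,x)\<close> this gives \<open>|\<xi> - p/q| < q^(-\<mu>)\<close>, and such \<open>n\<close>
  occur arbitrarily late as soon as \<open>\<mu> < rep(x)/(rep(x) - 1)\<close>.\<close>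

lemma termwise_eq_if_sums_eq:
  fixes f g :: "nat \<Rightarrow> real"
  assumes "f sums s" "g sums s" "\<And>j. f j \<le> g j"
  shows "f j = g j"
proof -
  have diff: "(\<lambda>j. g j - f j) sums 0" using sums_diff[OF assms(2,1)] by simp
  have "(\<Sum>j. g j - f j) = 0" using sums_unique[OF diff] by simp
  then have "\<forall>j. g j - f j = 0"
    using suminf_eq_zero_iff[OF sums_summable[OF diff]] assms(3) by simp
  then show ?thesis by simp
qed

lemma exists_coprime_fraction:
  fixes P Q :: int
  assumes "Q > 0"
  obtains p q :: int where "0 < q" "q \<le> Q" "coprime p q"
    "real_of_int p / real_of_int q = real_of_int P / real_of_int Q"
proof
  define g where "g = gcd P Q"
  have "0 < g" "g \<le> Q" unfolding g_def using assms by simp_all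
  have P: "P = (P div g) * g" and Q: "Q = (Q div g) * g" unfolding g_def by simp_all
  show "0 < Q div g" using \<open>0 < g\<close> \<open>g \<le> Q\<close> by (simp add: pos_imp_zdiv_pos_iff)
  then have "Q div g * 1 \<le> Q div g * g" using \<open>0 < g\<close> by (intro mult_left_mono) simp_all
  then show "Q div g \<le> Q" using Q by simp
  show "coprime (P div g) (Q div g)" unfolding g_def using assms by (intro div_gcd_coprime) simp
  have "real_of_int P / real_of_int Q
      = (real_of_int (P div g) * real_of_int g) / (real_of_int (Q div g) * real_of_int g)"
    by (subst P, subst Q) simp
  then show "real_of_int (P div g) / real_of_int (Q div g) = real_of_int P / real_of_int Q"
    using \<open>0 < g\<close> by simp
qed

lemma infinite_coprime_approximations:
  fixes \<xi> \<mu> :: real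
  assumes irrational: "\<xi> \<notin> \<rat>" and "0 \<le> \<mu>"
    and approx: "\<And>\<epsilon>. \<epsilon> > 0 \<Longrightarrow> \<exists>P Q :: int. Q > 0 \<and>
        \<bar>\<xi> - real_of_int P / real_of_int Q\<bar> < \<epsilon> \<and>
        \<bar>\<xi> - real_of_int P / real_of_int Q\<bar> < real_of_int Q powr (- \<mu>)"
  shows "infinite {(p::int, q::int). q > 0 \<and> coprime p q \<and>
        \<bar>\<xi> - real_of_int p / real_of_int q\<bar> < real_of_int q powr (- \<mu>)}"
    (is "infinite ?F")
proof
  assume "finite ?F"
  define dist where "dist = (\<lambda>(p, q). \<bar>\<xi> - real_of_int p / real_of_int q\<bar>)"
  define \<epsilon> where "\<epsilon> = Min (insert 1 (dist ` ?F))"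
  have dist_pos: "dist (p, q) > 0" for p q
  proof -
    have "real_of_int p / real_of_int q \<in> \<rat>" by simp
    then have "\<xi> \<noteq> real_of_int p / real_of_int q" using irrational by auto
    then show ?thesis unfolding dist_def by simp
  qed
  have "\<epsilon> > 0" unfolding \<epsilon>_def using \<open>finite ?F\<close> dist_pos by (subst Min_gr_iff) auto
  have \<epsilon>_le: "\<epsilon> \<le> dist (p, q)" if "(p, q) \<in> ?F" for p q
    unfolding \<epsilon>_def using \<open>finite ?F\<close> that by (intro Min_le) auto
  obtain P Q :: int where Q: "Q > 0" and close: "dist (P, Q) < \<epsilon>"
    and good: "dist (P, Q) < real_of_int Q powr (- \<mu>)"
    using approx[OF \<open>\<epsilon> > 0\<close>] unfolding dist_def by auto
  obtain p q where q: "0 < q" "q \<le> Q" "coprime p q"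
    and pq: "real_of_int p / real_of_int q = real_of_int P / real_of_int Q"
    using exists_coprime_fraction[OF Q] .
  have same_dist: "dist (p, q) = dist (P, Q)" unfolding dist_def using pq by simp
  have "real_of_int Q powr (- \<mu>) \<le> real_of_int q powr (- \<mu>)"
    using q \<open>0 \<le> \<mu>\<close> by (intro powr_mono2') auto
  then have "(p, q) \<in> ?F" using good q same_dist unfolding dist_def by auto
  then show False using \<epsilon>_le close same_dist by fastforce
qed

lemma frequently_less_of_Liminf_less:
  fixes f :: "'a \<Rightarrow> 'b :: complete_linorder"
  assumes "Liminf F f < c"
  shows "\<exists>\<^sub>F x in F. f x < c"
proof -
  obtain w where "w < c" "\<not> eventually (\<lambda>x. w < f x) F"
    using assms le_Liminf_iff[of c F f] by (auto simp: not_le)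
  then have "\<exists>\<^sub>F x in F. f x \<le> w" unfolding frequently_def by (simp add: not_le)
  then show ?thesis by (rule frequently_elim1) (use \<open>w < c\<close> in auto)
qed

lemma less_of_less_rep_bound:
  fixes \<rho> :: ereal and y :: real
  assumes "1 < y" "ereal y < rep_bound \<rho>"
  shows "\<rho> < ereal (y / (y - 1))"
proof (cases \<rho>)
  case (real r)
  have "r \<noteq> 1 \<Longrightarrow> y < r / (r - 1)" using assms(2) real unfolding rep_bound_def by simp
  moreover have "r < 1 \<Longrightarrow> r / (r - 1) < 1" by (simp add: divide_less_eq)
  ultimately consider "r = 1" | "1 < r" "y < r / (r - 1)" using \<open>1 < y\<close> by fastforce
  then show ?thesis using \<open>1 < y\<close> real by cases (auto simp: field_simps)
qed (use assms in \<open>auto simp: rep_bound_def\<close>)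

lemma rep_bound_le_if_frequently:
  fixes g :: "nat \<Rightarrow> nat" and E :: ereal
  assumes "eventually (\<lambda>n. n < g n) sequentially"
    and exponent: "\<And>\<mu>. 0 < \<mu> \<Longrightarrow>
        (\<exists>\<^sub>F n in sequentially. \<mu> * (real (g n) - real n) < real (g n)) \<Longrightarrow> ereal \<mu> \<le> E"
  shows "rep_bound (liminf (\<lambda>n. ereal (real (g n) / real n))) \<le> E"
    (is "rep_bound ?\<rho> \<le> E")
proof (rule dense_le)
  have large: "eventually (\<lambda>n. 1 \<le> n \<and> n < g n) sequentially"
    by (rule eventually_conj[OF eventually_ge_at_top assms(1)])
  have "ereal 1 \<le> E"
    by (rule exponent[OF _ eventually_frequently[OF _ eventually_mono[OF large]]]) auto
  have large_exponent: "ereal y \<le> E" if "1 < y" "ereal y < rep_bound ?\<rho>" for y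
  proof (rule exponent)
    define c where "c = y / (y - 1)"
    have "?\<rho> < ereal c" unfolding c_def using that by (rule less_of_less_rep_bound)
    then have "\<exists>\<^sub>F n in sequentially. ereal (real (g n) / real n) < ereal c"
      by (rule frequently_less_of_Liminf_less)
    then have "\<exists>\<^sub>F n in sequentially. ereal (real (g n) / real n) < ereal c \<and> 1 \<le> n \<and> n < g n"
      using large by (rule frequently_eventually_frequently)
    then show "\<exists>\<^sub>F n in sequentially. y * (real (g n) - real n) < real (g n)"
    proof (rule frequently_elim1)
      fix n assume "ereal (real (g n) / real n) < ereal c \<and> 1 \<le> n \<and> n < g n"
      then have "real (g n) < c * real n" by (simp add: divide_less_eq)
      then have "real (g n) * (y - 1) < y * real n" using \<open>1 < y\<close> by (simp add: c_def field_simps)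
      then show "y * (real (g n) - real n) < real (g n)" by argo
    qed
  qed (use that in simp)
  fix z assume z: "z < rep_bound ?\<rho>"
  show "z \<le> E"
  proof (cases z)
    case (real y)
    show ?thesis
    proof (cases "y \<le> 1")
      case True
      then have "z \<le> ereal 1" using real by simp
      also have "\<dots> \<le> E" by fact
      finally show ?thesis .
    next
      case False
      then show ?thesis using large_exponent[of y] z real by simp
    qed
  next
    case PInf
    then show ?thesis using z by simp
  qed simp
qed

lemma inverse_power_less_powr:
  fixes B Q \<mu> :: real and n v :: nat
  assumes "1 < B" "1 \<le> Q" "Q < B ^ v" "\<mu> * real v < real v + real n" "n \<ge> 1"
  shows "1 / B ^ n < Q powr (1 - \<mu>)"
proof (cases "\<mu> \<le> 1")
  case True
  have "1 / B ^ n < 1" using assms by (simp add: one_less_power)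
  also have "1 \<le> Q powr (1 - \<mu>)" using assms True by (intro ge_one_powr_ge_zero) auto
  finally show ?thesis .
next
  case False
  have "1 / B ^ n = B powr (- real n)"
    using assms by (simp add: powr_minus powr_realpow divide_inverse)
  also have "\<dots> \<le> B powr (real v * (1 - \<mu>))"
    using assms by (intro powr_mono) (simp_all add: algebra_simps)
  also have "\<dots> = (B ^ v) powr (1 - \<mu>)"
    using assms by (simp add: powr_powr powr_realpow[symmetric])
  also have "\<dots> < Q powr (1 - \<mu>)"
    using assms False by (intro powr_less_mono2_neg) auto
  finally show ?thesis .
qed

lemma approximation_of_small_linear_form:
  fixes \<xi> E \<mu> :: real and P Q :: int
  assumes "0 < Q" "\<bar>real_of_int Q * \<xi> - real_of_int P\<bar> \<le> E" "E < real_of_int Q powr (1 - \<mu>)"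
  shows "\<bar>\<xi> - real_of_int P / real_of_int Q\<bar> \<le> E"
    and "\<bar>\<xi> - real_of_int P / real_of_int Q\<bar> < real_of_int Q powr (- \<mu>)"
proof -
  have "\<bar>\<xi> - real_of_int P / real_of_int Q\<bar> = \<bar>real_of_int Q * \<xi> - real_of_int P\<bar> / real_of_int Q"
    using assms(1) by (simp add: field_simps abs_divide)
  also have "\<dots> \<le> E / real_of_int Q"
    using assms(1,2) by (intro divide_right_mono) simp_all
  finally have err: "\<bar>\<xi> - real_of_int P / real_of_int Q\<bar> \<le> E / real_of_int Q" .
  have "0 \<le> E" using assms(2) by linarith
  then have "E / real_of_int Q \<le> E"
    using divide_left_mono[of 1 "real_of_int Q" E] assms(1) by simp
  then show "\<bar>\<xi> - real_of_int P / real_of_int Q\<bar> \<le> E" using err by linarith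
  have "real_of_int Q powr (- \<mu>) = real_of_int Q powr (1 - \<mu>) / real_of_int Q"
    using assms(1) powr_diff[of "real_of_int Q" "1 - \<mu>" 1] by simp
  then have "E / real_of_int Q < real_of_int Q powr (- \<mu>)"
    using assms(1,3) by (metis divide_strict_right_mono of_int_0_less_iff)
  then show "\<bar>\<xi> - real_of_int P / real_of_int Q\<bar> < real_of_int Q powr (- \<mu>)" using err by linarith
qed

lemma eventually_periodicI:
  assumes "p > 0" "\<forall>k\<ge>N. x (k + p) = x k"
  shows "eventually_periodic x"
  unfolding eventually_periodic_def using assms by (intro exI[of _ p] conjI exI[of _ "max N 1"]) auto

lemma eventually_periodic_if_eventually_constant:
  assumes "\<forall>j. x (k + j + 1) = c"
  shows "eventually_periodic x"
proof (rule eventually_periodicI[of 1 "k + 1"])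
  show "\<forall>K\<ge>k + 1. x (K + 1) = x K"
  proof (intro allI impI)
    fix K assume "k + 1 \<le> K"
    then show "x (K + 1) = x K" using assms[rule_format, of "K - k"] assms[rule_format, of "K - k - 1"] by simp
  qed
qed simp

locale digit_expansion =
  fixes b :: nat and x :: "nat \<Rightarrow> nat"
  assumes base: "b \<ge> 2" and tail_term_less: "\<forall>k\<ge>1. x k < b"
begin

definition tail :: "nat \<Rightarrow> real" where
  "tail k = (\<Sum>j. real (x (k + j + 1)) / real b ^ (j + 1))"

lemma sums_max_digits: "(\<lambda>j. real (b - 1) / real b ^ (j + 1)) sums 1"
proof -
  have "norm (1 / real b) < 1" using base by simp
  then have "(\<lambda>j. real (b - 1) / real b * (1 / real b) ^ j)
      sums (real (b - 1) / real b * (1 / (1 - 1 / real b)))"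
    by (intro sums_mult geometric_sums)
  moreover have "real (b - 1) / real b * (1 / (1 - 1 / real b)) = 1"
    using base by (simp add: of_nat_diff field_simps)
  moreover have "real (b - 1) / real b * (1 / real b) ^ j = real (b - 1) / real b ^ (j + 1)" for j
    by (simp add: power_one_over)
  ultimately show ?thesis by (simp only:)
qed

lemma tail_term_le: "real (x (k + j + 1)) / real b ^ (j + 1) \<le> real (b - 1) / real b ^ (j + 1)"
proof -
  have "x (k + j + 1) \<le> b - 1" using tail_term_less[rule_format, of "k + j + 1"] by simp
  then show ?thesis by (intro divide_right_mono) simp_all
qed

lemma tail_sums: "(\<lambda>j. real (x (k + j + 1)) / real b ^ (j + 1)) sums tail k"
proof -
  have "summable (\<lambda>j. real (x (k + j + 1)) / real b ^ (j + 1))"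
  proof (rule summable_comparison_test'[OF sums_summable[OF sums_max_digits]])
    show "norm (real (x (k + j + 1)) / real b ^ (j + 1)) \<le> real (b - 1) / real b ^ (j + 1)" for j
      using tail_term_le[of k j] by simp
  qed
  then show ?thesis unfolding tail_def by (rule summable_sums)
qed

lemma tail_nonneg: "0 \<le> tail k"
  using sums_le[of "\<lambda>_. 0", OF _ sums_zero tail_sums] by simp

lemma tail_le_one: "tail k \<le> 1"
  using sums_le[OF _ tail_sums sums_max_digits] tail_term_le by blast

lemma tail_split:
  "tail k = (\<Sum>j<n. real (x (k + j + 1)) / real b ^ (j + 1)) + tail (k + n) / real b ^ n"
proof -
  define f where "f j = real (x (k + j + 1)) / real b ^ (j + 1)" for j
  have shifted: "(\<lambda>j. f (j + n)) = (\<lambda>j. real (x (k + n + j + 1)) / real b ^ (j + 1) / real b ^ n)"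
    unfolding f_def by (simp add: power_add algebra_simps)
  have "(\<lambda>j. f (j + n)) sums (tail k - (\<Sum>j<n. f j))"
    using sums_split_initial_segment[OF tail_sums[of k]] unfolding f_def .
  moreover have "(\<lambda>j. f (j + n)) sums (tail (k + n) / real b ^ n)"
    unfolding shifted by (rule sums_divide[OF tail_sums])
  ultimately have "tail k - (\<Sum>j<n. f j) = tail (k + n) / real b ^ n" by (rule sums_unique2)
  then show ?thesis unfolding f_def by simp
qed

lemma tail_shift:
  "real b ^ n * tail k = real (\<Sum>j<n. x (k + j + 1) * b ^ (n - 1 - j)) + tail (k + n)"
proof -
  have "real b ^ n * (real (x (k + j + 1)) / real b ^ (j + 1)) = real (x (k + j + 1) * b ^ (n - 1 - j))"
    if "j < n" for j
  proof -
    have "n = (n - 1 - j) + (j + 1)" using that by simp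
    then have "real b ^ n = real b ^ (n - 1 - j) * real b ^ (j + 1)" by (metis power_add)
    then show ?thesis using base by simp
  qed
  then show ?thesis
    using tail_split[of k n] base by (simp add: distrib_left sum_distrib_left)
qed

lemma exists_repetition:
  assumes "n \<ge> 1"
  shows "\<exists>m. m \<ge> 1 \<and> (\<exists>i. 1 \<le> i \<and> i + n \<le> m \<and> (\<forall>j<n. x (i + j) = x (m + 1 - n + j)))"
proof -
  define word where "word i = map (\<lambda>j. x (i + j)) [0..<n]" for i
  define words where "words = {w. set w \<subseteq> {0..<b} \<and> length w = n}"
  have "word ` {1..b ^ n + 1} \<subseteq> words"
    unfolding word_def words_def using tail_term_less by auto
  then have "card (word ` {1..b ^ n + 1}) \<le> card words"
    unfolding words_def by (intro card_mono finite_lists_length_eq) simp_all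
  also have "card words = b ^ n" unfolding words_def by (simp add: card_lists_length_eq)
  finally have "\<not> inj_on word {1..b ^ n + 1}" by (intro pigeonhole) simp
  then obtain i i' where ii': "i \<in> {1..b ^ n + 1}" "i < i'" "word i = word i'"
    using linorder_inj_onI'[of "{1..b ^ n + 1}" word] by blast
  have "x (i + j) = x (i' + j)" if "j < n" for j
    using arg_cong[OF ii'(3), of "\<lambda>w. w ! j"] that unfolding word_def by simp
  then show ?thesis
    using assms ii' by (intro exI[of _ "i' + n - 1"] conjI exI[of _ i]) auto
qed

lemma rfun_repetition:
  assumes "n \<ge> 1"
  shows "rfun n x \<ge> 1 \<and> (\<exists>i. 1 \<le> i \<and> i + n \<le> rfun n x \<and>
           (\<forall>j<n. x (i + j) = x (rfun n x + 1 - n + j)))"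
  unfolding rfun_def by (rule LeastI_ex[OF exists_repetition[OF assms]])

lemma rfun_gt: "n \<ge> 1 \<Longrightarrow> n < rfun n x"
  using rfun_repetition by fastforce

lemma repetition_approximation:
  assumes "n \<ge> 1"
  obtains P Q :: int where "0 < Q" "real_of_int Q < real b ^ (rfun n x - n)"
    "\<bar>real_of_int Q * tail 0 - real_of_int P\<bar> \<le> 1 / real b ^ n"
proof -
  define m where "m = rfun n x"
  obtain i where i: "1 \<le> i" "i + n \<le> m" "\<forall>j<n. x (i + j) = x (m + 1 - n + j)"
    using rfun_repetition[OF assms] unfolding m_def by blast
  define u where "u = i - 1"
  define v where "v = m - n"
  have "u < v" using i assms unfolding u_def v_def by auto
  have same_block: "(\<Sum>j<n. real (x (u + j + 1)) / real b ^ (j + 1))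
      = (\<Sum>j<n. real (x (v + j + 1)) / real b ^ (j + 1))"
  proof (rule sum.cong[OF refl])
    fix j assume "j \<in> {..<n}"
    then have "x (i + j) = x (m + 1 - n + j)" using i(3) by simp
    moreover have "u + j + 1 = i + j" "v + j + 1 = m + 1 - n + j" using i unfolding u_def v_def by auto
    ultimately show "real (x (u + j + 1)) / real b ^ (j + 1) = real (x (v + j + 1)) / real b ^ (j + 1)"
      by (simp only:)
  qed
  have "\<bar>tail (v + n) - tail (u + n)\<bar> \<le> 1"
    unfolding abs_le_iff
    using tail_nonneg[of "u + n"] tail_le_one[of "u + n"] tail_nonneg[of "v + n"] tail_le_one[of "v + n"]
    by linarith
  then have close: "\<bar>tail v - tail u\<bar> \<le> 1 / real b ^ n"
    using tail_split[of u n] tail_split[of v n] same_block base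
    by (simp add: diff_divide_distrib[symmetric] abs_divide divide_right_mono)
  define S where "S k = (\<Sum>j<k. x (j + 1) * b ^ (k - 1 - j))" for k
  have shift: "real b ^ k * tail 0 = real (S k) + tail k" for k
    using tail_shift[of k 0] unfolding S_def by simp
  show ?thesis
  proof
    have "b ^ u < b ^ v" using \<open>u < v\<close> base by (intro power_strict_increasing) auto
    then show "0 < int b ^ v - int b ^ u" by (metis of_nat_less_iff of_nat_power diff_gt_0_iff_gt)
    show "real_of_int (int b ^ v - int b ^ u) < real b ^ (rfun n x - n)"
      unfolding v_def m_def using base by simp
    have "real_of_int (int b ^ v - int b ^ u) * tail 0 - real_of_int (int (S v) - int (S u))
        = tail v - tail u"
      using shift[of u] shift[of v] by (simp add: algebra_simps)
    then show "\<bar>real_of_int (int b ^ v - int b ^ u) * tail 0 - real_of_int (int (S v) - int (S u))\<bar>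
        \<le> 1 / real b ^ n"
      using close by simp
  qed
qed

end

locale aperiodic_expansion = digit_expansion +
  assumes aperiodic: "\<not> eventually_periodic x"
begin

lemma tail_pos: "0 < tail k"
proof (rule ccontr)
  assume "\<not> 0 < tail k"
  then have "(\<lambda>j. real (x (k + j + 1)) / real b ^ (j + 1)) sums 0"
    using tail_sums[of k] tail_nonneg[of k] by simp
  then have "real (x (k + j + 1)) / real b ^ (j + 1) = 0" for j
    by (rule termwise_eq_if_sums_eq[OF sums_zero, symmetric]) simp
  then have "\<forall>j. x (k + j + 1) = 0" using base by simp
  then show False using aperiodic eventually_periodic_if_eventually_constant by blast
qed

lemma tail_less_one: "tail k < 1"
proof (rule ccontr)
  assume "\<not> tail k < 1"
  then have "(\<lambda>j. real (x (k + j + 1)) / real b ^ (j + 1)) sums 1"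
    using tail_sums[of k] tail_le_one[of k] by simp
  then have "real (x (k + j + 1)) / real b ^ (j + 1) = real (b - 1) / real b ^ (j + 1)" for j
    by (rule termwise_eq_if_sums_eq[OF _ sums_max_digits tail_term_le])
  then have "real (x (k + j + 1)) = real (b - 1)" for j using base by (simp only: divide_cancel_right) simp
  then have "\<forall>j. x (k + j + 1) = b - 1" using of_nat_eq_iff by blast
  then show False using aperiodic eventually_periodic_if_eventually_constant by blast
qed

lemma tail_step:
  "int (x (k + 1)) = \<lfloor>real b * tail k\<rfloor>" "tail (k + 1) = real b * tail k - real (x (k + 1))"
proof -
  have "tail k = real (x (k + 1)) / real b + tail (k + 1) / real b"
    using tail_split[of k 1] by simp
  then show step: "tail (k + 1) = real b * tail k - real (x (k + 1))"
    using base by (simp add: field_simps)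
  show "int (x (k + 1)) = \<lfloor>real b * tail k\<rfloor>"
    using tail_pos[of "k + 1"] tail_less_one[of "k + 1"] step by (intro floor_unique[symmetric]) auto
qed

lemma digits_eq_if_tail_eq:
  assumes "tail k = tail k'"
  shows "tail (k + j) = tail (k' + j) \<and> x (k + j + 1) = x (k' + j + 1)"
proof (induction j)
  case 0
  then show ?case using tail_step(1)[of k] tail_step(1)[of k'] assms by simp
next
  case (Suc j)
  then have "tail (k + Suc j) = tail (k' + Suc j)"
    using tail_step(2)[of "k + j"] tail_step(2)[of "k' + j"] by simp
  then show ?case using tail_step(1)[of "k + Suc j"] tail_step(1)[of "k' + Suc j"] by simp
qed

lemma inj_tail: "inj tail"
proof (rule linorder_inj_onI')
  fix k k' :: nat assume "k < k'"
  show "tail k \<noteq> tail k'"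
  proof
    assume "tail k = tail k'"
    have "\<forall>K\<ge>k + 1. x (K + (k' - k)) = x K"
    proof (intro allI impI)
      fix K assume "k + 1 \<le> K"
      have "x (k + (K - k - 1) + 1) = x (k' + (K - k - 1) + 1)"
        using digits_eq_if_tail_eq[OF \<open>tail k = tail k'\<close>] by blast
      moreover have "k + (K - k - 1) + 1 = K" "k' + (K - k - 1) + 1 = K + (k' - k)"
        using \<open>k + 1 \<le> K\<close> \<open>k < k'\<close> by auto
      ultimately show "x (K + (k' - k)) = x K" by simp
    qed
    then show False
      using aperiodic eventually_periodicI[of "k' - k" "k + 1" x] \<open>k < k'\<close> by simp
  qed
qed

lemma tail_zero_irrational: "tail 0 \<notin> \<rat>"
proof
  assume "tail 0 \<in> \<rat>"
  then obtain a c :: int where "c > 0" and "tail 0 = of_int a / of_int c" by (rule Rats_cases')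
  have "real_of_int c * tail k \<in> of_int ` {0..c}" for k
  proof -
    define S where "S = (\<Sum>j<k. x (0 + j + 1) * b ^ (k - 1 - j))"
    define z where "z = int b ^ k * a - c * int S"
    have "real_of_int c * tail k = real_of_int c * (real b ^ k * tail 0) - of_int c * real S"
      using tail_shift[of k 0] unfolding S_def by (simp add: algebra_simps)
    also have "real_of_int c * (real b ^ k * tail 0) = real b ^ k * of_int a"
      using \<open>tail 0 = of_int a / of_int c\<close> \<open>c > 0\<close> by simp
    finally have z: "real_of_int c * tail k = of_int z" unfolding z_def by simp
    have "0 \<le> real_of_int c * tail k" "real_of_int c * tail k \<le> of_int c"
      using tail_nonneg[of k] tail_le_one[of k] \<open>c > 0\<close> by auto
    then have "z \<in> {0..c}" unfolding z by simp
    then show ?thesis unfolding z by (rule imageI)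
  qed
  then have "range (\<lambda>k. real_of_int c * tail k) \<subseteq> of_int ` {0..c}" by blast
  then have "finite (range (\<lambda>k. real_of_int c * tail k))" by (rule finite_subset) simp
  moreover have "inj (\<lambda>k. real_of_int c * tail k)"
  proof (rule injI)
    fix k k' assume "real_of_int c * tail k = real_of_int c * tail k'"
    then have "tail k = tail k'" using \<open>c > 0\<close> by simp
    with inj_tail show "k = k'" by (rule injD)
  qed
  ultimately have "finite (UNIV :: nat set)" by (rule finite_imageD)
  then show False by simp
qed

lemma infinite_approximations_of_tail:
  assumes "0 \<le> \<mu>"
    and "\<exists>\<^sub>F n in sequentially. \<mu> * (real (rfun n x) - real n) < real (rfun n x)"
  shows "infinite {(p::int, q::int). q > 0 \<and> coprime p q \<and>
        \<bar>tail 0 - real_of_int p / real_of_int q\<bar> < real_of_int q powr (- \<mu>)}"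
proof (rule infinite_coprime_approximations[OF tail_zero_irrational \<open>0 \<le> \<mu>\<close>])
  fix \<epsilon> :: real assume "\<epsilon> > 0"
  have "eventually (\<lambda>n. (1 / real b) ^ n < \<epsilon>) sequentially"
    using base by (intro order_tendstoD(2)[OF LIMSEQ_power_zero \<open>\<epsilon> > 0\<close>]) auto
  then have "eventually (\<lambda>n. 1 \<le> n \<and> 1 / real b ^ n < \<epsilon>) sequentially"
    unfolding power_one_over by (rule eventually_conj[OF eventually_ge_at_top])
  with assms(2) have "\<exists>\<^sub>F n in sequentially.
      \<mu> * (real (rfun n x) - real n) < real (rfun n x) \<and> 1 \<le> n \<and> 1 / real b ^ n < \<epsilon>"
    by (rule frequently_eventually_frequently)
  then obtain n where n: "\<mu> * (real (rfun n x) - real n) < real (rfun n x)" "1 \<le> n"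
      "1 / real b ^ n < \<epsilon>"
    by (auto dest: frequently_ex)
  obtain P Q :: int where Q: "0 < Q" "real_of_int Q < real b ^ (rfun n x - n)"
    and PQ: "\<bar>real_of_int Q * tail 0 - real_of_int P\<bar> \<le> 1 / real b ^ n"
    using repetition_approximation[OF n(2)] .
  have "real (rfun n x - n) = real (rfun n x) - real n" using rfun_gt[OF n(2)] by simp
  then have small: "1 / real b ^ n < real_of_int Q powr (1 - \<mu>)"
    using base Q n by (intro inverse_power_less_powr[of _ _ "rfun n x - n"]) auto
  show "\<exists>P Q :: int. Q > 0 \<and>
      \<bar>tail 0 - real_of_int P / real_of_int Q\<bar> < \<epsilon> \<and>
      \<bar>tail 0 - real_of_int P / real_of_int Q\<bar> < real_of_int Q powr (- \<mu>)"
    using approximation_of_small_linear_form[OF Q(1) PQ small] n(3) Q(1)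
    by (intro exI[of _ P] exI[of _ Q]) auto
qed

end

theorem theorem4p2:
  fixes b :: nat and x :: "nat \<Rightarrow> nat"
  assumes "b \<ge> 2"
    and "\<forall>k\<ge>1. x k < b"
    and "\<not> eventually_periodic x"
  shows "irrationality_exponent (\<Sum>k. real (x (k + 1)) / real b ^ (k + 1))
           \<ge> rep_bound (rep x)"
proof -
  interpret aperiodic_expansion b x
    using assms by unfold_locales
  have "rep_bound (rep x) \<le> irrationality_exponent (tail 0)"
    unfolding rep_def
  proof (rule rep_bound_le_if_frequently)
    show "eventually (\<lambda>n. n < rfun n x) sequentially"
      using eventually_ge_at_top[of 1] by (rule eventually_mono) (rule rfun_gt)
    fix \<mu> :: real
    assume "0 < \<mu>" "\<exists>\<^sub>F n in sequentially. \<mu> * (real (rfun n x) - real n) < real (rfun n x)"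
    then show "ereal \<mu> \<le> irrationality_exponent (tail 0)"
      unfolding irrationality_exponent_def
      by (intro Sup_upper imageI) (simp add: infinite_approximations_of_tail)
  qed
  then show ?thesis unfolding tail_def by simp
qed

end
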